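(* For every 3-periodic of the elliptic billiard, the interior angles $\theta^\dagger_{1,i}$ ($i=1,2,3$) of its $f_1$-inversive triangle satisfy $$\sum_{i=1}^3\cos\theta^\dagger_{1,i}=\frac{\delta\,(a^2+c^2-\delta)}{a^2c^2},\qquad \delta=\sqrt{a^4-a^2b^2+b^4}.$$
   Context: The elliptic billiard is $\mathcal{E}: x^2/a^2+y^2/b^2=1$, $a>b>0$, $c=\sqrt{a^2-b^2}$, with focus $f_1=(-c,0)$. A 3-periodic is a triangle $P_1P_2P_3$ inscribed in $\mathcal{E}$ that is a closed billiard trajectory (at each vertex the normal to $\mathcal{E}$ bisects the angle between the two incident sides). The $f_1$-inversive triangle has vertices $P^\dagger_{1,i}=f_1+\rho^2\,(P_i-f_1)/|P_i-f_1|^2$, the inversions of the $P_i$ in a circle of radius $\rho>0$ centered at $f_1$ (its angles do not depend on $\rho$). *)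

theory Defs
  imports "HOL-Analysis.Analysis"
begin

type_synonym pt = "real \<times> real"

definition vec_angle :: "pt \<Rightarrow> pt \<Rightarrow> real" where
  "vec_angle u v = arccos ((u \<bullet> v) / (norm u * norm v))"

definition tri_angle :: "pt \<Rightarrow> pt \<Rightarrow> pt \<Rightarrow> real" where
  "tri_angle A B C = vec_angle (B - A) (C - A)"

definition on_ellipse :: "real \<Rightarrow> real \<Rightarrow> pt \<Rightarrow> bool" where
  "on_ellipse a b P \<longleftrightarrow> (fst P)\<^sup>2 / a\<^sup>2 + (snd P)\<^sup>2 / b\<^sup>2 = 1"

text \<open>Outward normal of the ellipse at P (gradient of the defining function, up to factor 2).\<close>
definition ellipse_normal :: "real \<Rightarrow> real \<Rightarrow> pt \<Rightarrow> pt" where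
  "ellipse_normal a b P = (fst P / a\<^sup>2, snd P / b\<^sup>2)"

text \<open>Billiard reflection law at vertex P with neighbours Q and R:
  the normal line bisects the angle between the two incident sides.\<close>
definition reflects_at :: "real \<Rightarrow> real \<Rightarrow> pt \<Rightarrow> pt \<Rightarrow> pt \<Rightarrow> bool" where
  "reflects_at a b Q P R \<longleftrightarrow>
     vec_angle (Q - P) (ellipse_normal a b P) = vec_angle (R - P) (ellipse_normal a b P)"

definition three_periodic :: "real \<Rightarrow> real \<Rightarrow> pt \<Rightarrow> pt \<Rightarrow> pt \<Rightarrow> bool" where
  "three_periodic a b P1 P2 P3 \<longleftrightarrow>
     P1 \<noteq> P2 \<and> P2 \<noteq> P3 \<and> P1 \<noteq> P3 \<and>
     on_ellipse a b P1 \<and> on_ellipse a b P2 \<and> on_ellipse a b P3 \<and>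
     reflects_at a b P3 P1 P2 \<and> reflects_at a b P1 P2 P3 \<and> reflects_at a b P2 P3 P1"

definition invert :: "pt \<Rightarrow> real \<Rightarrow> pt \<Rightarrow> pt" where
  "invert f rho P = f + (rho\<^sup>2 / (norm (P - f))\<^sup>2) *\<^sub>R (P - f)"

end

theory Submission
  imports Defs
begin

(* Write P_k = (a cos t_k, b sin t_k). At each vertex the reflection law says that the two
   chords have the same ratio (1 - cos (t_i - t_j)) / |P_i - P_j|, so all three chords share
   it; against the chord length formula this becomes one relation symmetric in the endpoints
   (all sides touch a common confocal caustic). In z_k = exp (i t_k) it forces
   z1 + z2 + z3 = -g z1 z2 z3 and z1 z2 + z2 z3 + z3 z1 = -g, where g is a root of a quadratic
   fixed by a and c. Inversion about f1 scales the side opposite P_k by |P_k - f1| = a + c cos t_k,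
   so the inversive triangle is similar to one with sides W_k = (1 - cos (t_i - t_j)) (a + c cos t_k).
   Its cosine sum 1 + (W2 + W3 - W1) (W3 + W1 - W2) (W1 + W2 - W3) / (2 W1 W2 W3) is symmetric in
   the z_k, hence a function of g alone after reducing to elementary symmetric polynomials. *)

lemma cos_vec_angle: "cos (vec_angle u v) = (u \<bullet> v) / (norm u * norm v)"
proof -
  have "\<bar>(u \<bullet> v) / (norm u * norm v)\<bar> \<le> 1"
  proof (cases "u = 0 \<or> v = 0")
    case False
    then have "norm u * norm v > 0" by simp
    then show ?thesis using Cauchy_Schwarz_ineq2[of u v] by (simp add: abs_div)
  qed auto
  then show ?thesis
    unfolding vec_angle_def by (rule cos_arccos_abs)
qed

lemma cos_tri_angle:
  "cos (tri_angle A B C)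
     = ((norm (B - A))\<^sup>2 + (norm (C - A))\<^sup>2 - (norm (C - B))\<^sup>2) / (2 * norm (B - A) * norm (C - A))"
proof -
  have "(B - A) \<bullet> (C - A) = ((norm (B - A))\<^sup>2 + (norm (C - A))\<^sup>2 - (norm (C - B))\<^sup>2) / 2"
    using dot_norm_neg[of "B - A" "C - A"] by (simp add: norm_minus_commute)
  then show ?thesis
    unfolding tri_angle_def cos_vec_angle by (simp only: divide_divide_eq_left mult.assoc)
qed

definition cos_sum_sides :: "real \<Rightarrow> real \<Rightarrow> real \<Rightarrow> real" where
  "cos_sum_sides l1 l2 l3 =
     (l2\<^sup>2 + l3\<^sup>2 - l1\<^sup>2) / (2 * l2 * l3) + (l3\<^sup>2 + l1\<^sup>2 - l2\<^sup>2) / (2 * l3 * l1)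
     + (l1\<^sup>2 + l2\<^sup>2 - l3\<^sup>2) / (2 * l1 * l2)"

lemma cos_sum_tri_angle:
  "cos (tri_angle A B C) + cos (tri_angle B C A) + cos (tri_angle C A B)
     = cos_sum_sides (norm (B - C)) (norm (C - A)) (norm (A - B))"
  unfolding cos_tri_angle cos_sum_sides_def
  by (simp add: norm_minus_commute[of A B] norm_minus_commute[of B C] norm_minus_commute[of C A]
      ac_simps)

lemma cos_sum_sides_scale:
  assumes "k \<noteq> 0"
  shows "cos_sum_sides (k * l1) (k * l2) (k * l3) = cos_sum_sides l1 l2 l3"
proof -
  have "((k * x)\<^sup>2 + (k * y)\<^sup>2 - (k * z)\<^sup>2) / (2 * (k * x) * (k * y))
      = (x\<^sup>2 + y\<^sup>2 - z\<^sup>2) / (2 * x * y)" for x y z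
  proof -
    have num: "(k * x)\<^sup>2 + (k * y)\<^sup>2 - (k * z)\<^sup>2 = k\<^sup>2 * (x\<^sup>2 + y\<^sup>2 - z\<^sup>2)"
      and den: "2 * (k * x) * (k * y) = k\<^sup>2 * (2 * x * y)"
      by algebra+
    show ?thesis
      unfolding num den using assms by simp
  qed
  then show ?thesis unfolding cos_sum_sides_def by presburger
qed

lemma cos_sum_sides_eq:
  assumes "l1 \<noteq> 0" "l2 \<noteq> 0" "l3 \<noteq> 0"
  shows "cos_sum_sides l1 l2 l3
     = 1 + (l2 + l3 - l1) * (l3 + l1 - l2) * (l1 + l2 - l3) / (2 * l1 * l2 * l3)"
  using assms unfolding cos_sum_sides_def by (simp add: field_simps) algebra

lemma norm_invert_diff:
  assumes "P \<noteq> f" "P' \<noteq> f"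
  shows "norm (invert f \<rho> P - invert f \<rho> P') = \<rho>\<^sup>2 * norm (P - P') / (norm (P - f) * norm (P' - f))"
proof -
  define u v where "u = P - f" and "v = P' - f"
  have u: "norm u > 0" and v: "norm v > 0"
    using assms unfolding u_def v_def by auto
  have inv: "invert f \<rho> P - invert f \<rho> P' = (\<rho>\<^sup>2 / (norm u)\<^sup>2) *\<^sub>R u - (\<rho>\<^sup>2 / (norm v)\<^sup>2) *\<^sub>R v"
    unfolding invert_def u_def v_def by simp
  have expand: "(norm (\<alpha> *\<^sub>R u - \<beta> *\<^sub>R v))\<^sup>2
      = \<alpha>\<^sup>2 * (norm u)\<^sup>2 - 2 * \<alpha> * \<beta> * (u \<bullet> v) + \<beta>\<^sup>2 * (norm v)\<^sup>2" for \<alpha> \<beta>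
    unfolding power2_norm_eq_inner
    by (simp add: inner_diff_left inner_diff_right inner_commute power2_eq_square algebra_simps)
  have diff: "norm (u - v) * norm (u - v) = norm u * norm u - 2 * (u \<bullet> v) + norm v * norm v"
    using expand[of 1 1] by (simp add: power2_eq_square)
  have "(norm (invert f \<rho> P - invert f \<rho> P'))\<^sup>2 = (\<rho>\<^sup>2 * norm (u - v) / (norm u * norm v))\<^sup>2"
    unfolding inv expand using u v by (simp add: diff field_simps power2_eq_square)
  then have "norm (invert f \<rho> P - invert f \<rho> P') = \<rho>\<^sup>2 * norm (u - v) / (norm u * norm v)"
    using u v by (simp add: power2_eq_iff_nonneg)
  then show ?thesis
    unfolding u_def v_def by simp
qed

lemma cos_sum_invert:
  assumes "\<rho> \<noteq> 0" "P1 \<noteq> f" "P2 \<noteq> f" "P3 \<noteq> f"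
  defines "Q1 \<equiv> invert f \<rho> P1" and "Q2 \<equiv> invert f \<rho> P2" and "Q3 \<equiv> invert f \<rho> P3"
  shows "cos (tri_angle Q1 Q2 Q3) + cos (tri_angle Q2 Q3 Q1) + cos (tri_angle Q3 Q1 Q2)
    = cos_sum_sides (norm (P2 - P3) * norm (P1 - f)) (norm (P3 - P1) * norm (P2 - f))
        (norm (P1 - P2) * norm (P3 - f))"
proof -
  define k where "k = \<rho>\<^sup>2 / (norm (P1 - f) * norm (P2 - f) * norm (P3 - f))"
  have "k \<noteq> 0"
    using assms(1-4) unfolding k_def by simp
  have "norm (Q2 - Q3) = k * (norm (P2 - P3) * norm (P1 - f))"
    "norm (Q3 - Q1) = k * (norm (P3 - P1) * norm (P2 - f))"
    "norm (Q1 - Q2) = k * (norm (P1 - P2) * norm (P3 - f))"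
    unfolding Q1_def Q2_def Q3_def k_def using assms(2-4) by (simp_all add: norm_invert_diff)
  then show ?thesis
    unfolding cos_sum_tri_angle using cos_sum_sides_scale[OF \<open>k \<noteq> 0\<close>] by simp
qed

lemma on_ellipse_unit_circle:
  assumes "a > 0" "b > 0" "on_ellipse a b P"
  obtains X Y where "P = (a * X, b * Y)" "X\<^sup>2 + Y\<^sup>2 = 1"
proof
  show "P = (a * (fst P / a), b * (snd P / b))"
    using assms(1,2) by simp
  show "(fst P / a)\<^sup>2 + (snd P / b)\<^sup>2 = 1"
    using assms(3) unfolding on_ellipse_def by (simp add: power_divide)
qed

lemma unit_circle_chord_pos:
  fixes X Y X' Y' :: real
  assumes "X\<^sup>2 + Y\<^sup>2 = 1" "X'\<^sup>2 + Y'\<^sup>2 = 1" "(X, Y) \<noteq> (X', Y')"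
  shows "1 - X * X' - Y * Y' > 0"
proof -
  have "1 - X * X' - Y * Y' = ((X - X')\<^sup>2 + (Y - Y')\<^sup>2) / 2"
    using assms(1,2) by algebra
  moreover have "(X - X')\<^sup>2 + (Y - Y')\<^sup>2 > 0"
    using assms(3) by (simp add: sum_power2_gt_zero_iff)
  ultimately show ?thesis by simp
qed

lemma ellipse_chord_norm_sq:
  fixes a b X Y X' Y' :: real
  assumes "X\<^sup>2 + Y\<^sup>2 = 1" "X'\<^sup>2 + Y'\<^sup>2 = 1"
  shows "(norm ((a * X, b * Y) - (a * X', b * Y')))\<^sup>2
     = (1 - X * X' - Y * Y') * (a\<^sup>2 + b\<^sup>2 - (a\<^sup>2 - b\<^sup>2) * (X * X' - Y * Y'))"
  using assms by (simp add: norm_Pair) algebra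

lemma ellipse_focal_distance:
  fixes a b c X Y :: real
  assumes "X\<^sup>2 + Y\<^sup>2 = 1" "c\<^sup>2 = a\<^sup>2 - b\<^sup>2" "0 \<le> c" "c < a"
  shows "norm ((a * X, b * Y) - (- c, 0)) = a + c * X" and "a + c * X > 0"
proof -
  have "X\<^sup>2 \<le> 1"
    using assms(1) zero_le_power2[of Y] by linarith
  then have "\<bar>X\<bar> \<le> 1"
    by (simp add: abs_square_le_1)
  then have "c * (- 1) \<le> c * X"
    using assms(3) by (intro mult_left_mono) auto
  then show pos: "a + c * X > 0"
    using assms(4) by linarith
  have "(a * X + c)\<^sup>2 + (b * Y)\<^sup>2 = (a + c * X)\<^sup>2"
    using assms(1,2) by algebra
  then show "norm ((a * X, b * Y) - (- c, 0)) = a + c * X"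
    using pos by (simp add: norm_Pair)
qed

lemma reflects_at_chord_ratio:
  fixes a b X Y X1 Y1 X2 Y2 :: real
  assumes "a > 0" "b > 0" "X\<^sup>2 + Y\<^sup>2 = 1"
    and "reflects_at a b (a * X1, b * Y1) (a * X, b * Y) (a * X2, b * Y2)"
  shows "(1 - X * X1 - Y * Y1) / norm ((a * X1, b * Y1) - (a * X, b * Y))
       = (1 - X * X2 - Y * Y2) / norm ((a * X2, b * Y2) - (a * X, b * Y))"
proof -
  define N where "N = ellipse_normal a b (a * X, b * Y)"
  have N: "N = (X / a, Y / b)"
    unfolding N_def ellipse_normal_def using assms(1,2) by (simp add: power2_eq_square)
  have "norm N \<noteq> 0"
    using assms unfolding N by (auto simp: zero_prod_def)
  have inner_N: "((a * X', b * Y') - (a * X, b * Y)) \<bullet> N = - (1 - X * X' - Y * Y')" for X' Y'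
    using assms(1-3) unfolding N by (simp add: field_simps power2_eq_square) algebra
  define w1 w2 L1 L2 where "w1 = 1 - X * X1 - Y * Y1" and "w2 = 1 - X * X2 - Y * Y2"
    and "L1 = norm ((a * X1, b * Y1) - (a * X, b * Y))"
    and "L2 = norm ((a * X2, b * Y2) - (a * X, b * Y))"
  have "- w1 / (L1 * norm N) = - w2 / (L2 * norm N)"
    using assms(4) unfolding w1_def w2_def L1_def L2_def inner_N[symmetric] cos_vec_angle[symmetric]
    unfolding reflects_at_def N_def by simp
  then have "- w1 / L1 / norm N = - w2 / L2 / norm N"
    by (simp only: divide_divide_eq_left)
  then have "- w1 / L1 = - w2 / L2"
    using \<open>norm N \<noteq> 0\<close> divide_cancel_right by blast
  then have "w1 / L1 = w2 / L2"
    by simp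
  then show ?thesis
    by (simp only: w1_def w2_def L1_def L2_def)
qed

lemma ellipse_chord_caustic:
  fixes a b X Y X' Y' \<mu> :: real
  assumes "a \<noteq> 0" "b \<noteq> 0" "X\<^sup>2 + Y\<^sup>2 = 1" "X'\<^sup>2 + Y'\<^sup>2 = 1" "1 - X * X' - Y * Y' > 0"
    and "(1 - X * X' - Y * Y') / norm ((a * X, b * Y) - (a * X', b * Y')) = \<mu>"
  shows "1 - X * X' - Y * Y' = \<mu>\<^sup>2 * (a\<^sup>2 + b\<^sup>2 - (a\<^sup>2 - b\<^sup>2) * (X * X' - Y * Y'))"
proof -
  define w L Q where "w = 1 - X * X' - Y * Y'" and "L = norm ((a * X, b * Y) - (a * X', b * Y'))"
    and "Q = a\<^sup>2 + b\<^sup>2 - (a\<^sup>2 - b\<^sup>2) * (X * X' - Y * Y')"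
  have "L \<noteq> 0"
  proof
    assume "L = 0"
    then have "X = X'" "Y = Y'"
      using assms(1,2) unfolding L_def by (auto simp: zero_prod_def)
    then show False
      using assms(3,5) by (simp add: power2_eq_square)
  qed
  then have "w = \<mu> * L"
    using assms(6) unfolding w_def L_def by (simp add: field_simps)
  then have "w * w = \<mu>\<^sup>2 * L\<^sup>2"
    by (simp add: power2_eq_square)
  also have "L\<^sup>2 = w * Q"
    using ellipse_chord_norm_sq[OF assms(3,4), of a b] unfolding w_def L_def Q_def .
  finally have "w * w = w * (\<mu>\<^sup>2 * Q)"
    by simp
  then show ?thesis
    using assms(5) unfolding w_def Q_def by simp
qed

lemma three_periodic_caustic:
  assumes "a > 0" "b > 0" "three_periodic a b P1 P2 P3"
  obtains X1 Y1 X2 Y2 X3 Y3 s where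
    "P1 = (a * X1, b * Y1)" "P2 = (a * X2, b * Y2)" "P3 = (a * X3, b * Y3)"
    "X1\<^sup>2 + Y1\<^sup>2 = 1" "X2\<^sup>2 + Y2\<^sup>2 = 1" "X3\<^sup>2 + Y3\<^sup>2 = 1"
    "(X1, Y1) \<noteq> (X2, Y2)" "(X2, Y2) \<noteq> (X3, Y3)" "(X3, Y3) \<noteq> (X1, Y1)" "s > 0"
    "1 - X2 * X3 - Y2 * Y3 = s * (a\<^sup>2 + b\<^sup>2 - (a\<^sup>2 - b\<^sup>2) * (X2 * X3 - Y2 * Y3))"
    "1 - X3 * X1 - Y3 * Y1 = s * (a\<^sup>2 + b\<^sup>2 - (a\<^sup>2 - b\<^sup>2) * (X3 * X1 - Y3 * Y1))"
    "1 - X1 * X2 - Y1 * Y2 = s * (a\<^sup>2 + b\<^sup>2 - (a\<^sup>2 - b\<^sup>2) * (X1 * X2 - Y1 * Y2))"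
proof -
  note tp = assms(3)[unfolded three_periodic_def]
  have a0: "a \<noteq> 0" and b0: "b \<noteq> 0"
    using assms(1,2) by auto
  obtain X1 Y1 where P1: "P1 = (a * X1, b * Y1)" and u1: "X1\<^sup>2 + Y1\<^sup>2 = 1"
    using on_ellipse_unit_circle assms(1,2) tp by metis
  obtain X2 Y2 where P2: "P2 = (a * X2, b * Y2)" and u2: "X2\<^sup>2 + Y2\<^sup>2 = 1"
    using on_ellipse_unit_circle assms(1,2) tp by metis
  obtain X3 Y3 where P3: "P3 = (a * X3, b * Y3)" and u3: "X3\<^sup>2 + Y3\<^sup>2 = 1"
    using on_ellipse_unit_circle assms(1,2) tp by metis
  have d12: "(X1, Y1) \<noteq> (X2, Y2)" and d23: "(X2, Y2) \<noteq> (X3, Y3)" and d31: "(X3, Y3) \<noteq> (X1, Y1)"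
    using tp unfolding P1 P2 P3 by auto
  define \<mu> where "\<mu> = (1 - X1 * X2 - Y1 * Y2) / norm (P1 - P2)"
  have at_P1: "(1 - X1 * X3 - Y1 * Y3) / norm (P3 - P1) = (1 - X1 * X2 - Y1 * Y2) / norm (P2 - P1)"
    using reflects_at_chord_ratio[OF assms(1,2) u1] tp unfolding P1 P2 P3 by blast
  have at_P2: "(1 - X2 * X1 - Y2 * Y1) / norm (P1 - P2) = (1 - X2 * X3 - Y2 * Y3) / norm (P3 - P2)"
    using reflects_at_chord_ratio[OF assms(1,2) u2] tp unfolding P1 P2 P3 by blast
  have r12: "(1 - X1 * X2 - Y1 * Y2) / norm (P1 - P2) = \<mu>"
    unfolding \<mu>_def ..
  have r23: "(1 - X2 * X3 - Y2 * Y3) / norm (P2 - P3) = \<mu>"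
    using at_P2 unfolding \<mu>_def by (simp add: norm_minus_commute[of P3] mult.commute)
  have r31: "(1 - X3 * X1 - Y3 * Y1) / norm (P3 - P1) = \<mu>"
    using at_P1 unfolding \<mu>_def by (simp add: norm_minus_commute[of P2] mult.commute)
  have "\<mu>\<^sup>2 > 0"
    using unit_circle_chord_pos[OF u1 u2 d12] tp(1) unfolding \<mu>_def by simp
  moreover note ellipse_chord_caustic[OF a0 b0 u2 u3 unit_circle_chord_pos[OF u2 u3 d23] r23[unfolded P2 P3]]
    ellipse_chord_caustic[OF a0 b0 u3 u1 unit_circle_chord_pos[OF u3 u1 d31] r31[unfolded P3 P1]]
    ellipse_chord_caustic[OF a0 b0 u1 u2 unit_circle_chord_pos[OF u1 u2 d12] r12[unfolded P1 P2]]
  ultimately show thesis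
    using that[OF P1 P2 P3 u1 u2 u3 d12 d23 d31] by blast
qed

lemma ellipse_chord_norm_caustic:
  fixes a b X Y X' Y' s :: real
  assumes "X\<^sup>2 + Y\<^sup>2 = 1" "X'\<^sup>2 + Y'\<^sup>2 = 1" "1 - X * X' - Y * Y' \<ge> 0" "s > 0"
    and "1 - X * X' - Y * Y' = s * (a\<^sup>2 + b\<^sup>2 - (a\<^sup>2 - b\<^sup>2) * (X * X' - Y * Y'))"
  shows "norm ((a * X, b * Y) - (a * X', b * Y')) = (1 - X * X' - Y * Y') / sqrt s"
proof -
  define w where "w = 1 - X * X' - Y * Y'"
  have "(norm ((a * X, b * Y) - (a * X', b * Y')))\<^sup>2 = w * (w / s)"
    using ellipse_chord_norm_sq[OF assms(1,2), of a b] assms(4,5) unfolding w_def by simp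
  also have "\<dots> = (w / sqrt s)\<^sup>2"
    using assms(4) by (simp add: power_divide power2_eq_square)
  finally show ?thesis
    using assms(3,4) unfolding w_def by (simp add: power2_eq_iff_nonneg)
qed

lemma unit_circle_relation_complex:
  fixes X Y X' Y' K g :: real
  assumes "X\<^sup>2 + Y\<^sup>2 = 1" "X'\<^sup>2 + Y'\<^sup>2 = 1" "K + (X * X' + Y * Y') = g * (X * X' - Y * Y')"
  defines "z \<equiv> Complex X Y" and "z' \<equiv> Complex X' Y'"
  shows "z\<^sup>2 + z'\<^sup>2 - of_real g * (z\<^sup>2 * z'\<^sup>2 + 1) + 2 * of_real K * z * z' = 0"
proof -
  have "(of_real X)\<^sup>2 + (of_real Y)\<^sup>2 = (1 :: complex)" "(of_real X')\<^sup>2 + (of_real Y')\<^sup>2 = (1 :: complex)"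
    using arg_cong[OF assms(1), of complex_of_real] arg_cong[OF assms(2), of complex_of_real] by simp_all
  moreover have "of_real K + (of_real X * of_real X' + of_real Y * of_real Y')
      = of_real g * (of_real X * of_real X' - of_real Y * of_real Y' :: complex)"
    using arg_cong[OF assms(3), of complex_of_real] by simp
  moreover have "\<i> * \<i> = (- 1 :: complex)"
    by simp
  ultimately show ?thesis
    unfolding z_def z'_def Complex_eq by algebra
qed

lemma unit_circle_triple_relations:
  fixes X1 Y1 X2 Y2 X3 Y3 K g :: real
  assumes u1: "X1\<^sup>2 + Y1\<^sup>2 = 1" and u2: "X2\<^sup>2 + Y2\<^sup>2 = 1" and u3: "X3\<^sup>2 + Y3\<^sup>2 = 1"
    and d12: "(X1, Y1) \<noteq> (X2, Y2)" and d23: "(X2, Y2) \<noteq> (X3, Y3)" and d31: "(X3, Y3) \<noteq> (X1, Y1)"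
    and "g \<noteq> 0"
    and r23: "K + (X2 * X3 + Y2 * Y3) = g * (X2 * X3 - Y2 * Y3)"
    and r31: "K + (X3 * X1 + Y3 * Y1) = g * (X3 * X1 - Y3 * Y1)"
    and r12: "K + (X1 * X2 + Y1 * Y2) = g * (X1 * X2 - Y1 * Y2)"
  defines "z1 \<equiv> Complex X1 Y1" and "z2 \<equiv> Complex X2 Y2" and "z3 \<equiv> Complex X3 Y3"
  shows "z1 + z2 + z3 = - of_real g * (z1 * z2 * z3)" and "z1 * z2 + z2 * z3 + z3 * z1 = - of_real g"
    and "2 * K - 1 = - g\<^sup>2"
proof -
  have F12: "z1\<^sup>2 + z2\<^sup>2 - of_real g * (z1\<^sup>2 * z2\<^sup>2 + 1) + 2 * of_real K * z1 * z2 = 0"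
    using unit_circle_relation_complex[OF u1 u2 r12] unfolding z1_def z2_def .
  have F23: "z2\<^sup>2 + z3\<^sup>2 - of_real g * (z2\<^sup>2 * z3\<^sup>2 + 1) + 2 * of_real K * z2 * z3 = 0"
    using unit_circle_relation_complex[OF u2 u3 r23] unfolding z2_def z3_def .
  have F31: "z3\<^sup>2 + z1\<^sup>2 - of_real g * (z3\<^sup>2 * z1\<^sup>2 + 1) + 2 * of_real K * z3 * z1 = 0"
    using unit_circle_relation_complex[OF u3 u1 r31] unfolding z3_def z1_def .
  have "z1 \<noteq> z2" "z2 \<noteq> z3" "z3 \<noteq> z1"
    using d12 d23 d31 unfolding z1_def z2_def z3_def by auto
  have "(z2 - z3) * ((1 - of_real g * z1\<^sup>2) * (z2 + z3) + 2 * of_real K * z1) = 0"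
    using F12 F31 by algebra
  then have G1: "(1 - of_real g * z1\<^sup>2) * (z2 + z3) + 2 * of_real K * z1 = 0"
    using \<open>z2 \<noteq> z3\<close> by simp
  have "(z3 - z1) * ((1 - of_real g * z2\<^sup>2) * (z3 + z1) + 2 * of_real K * z2) = 0"
    using F12 F23 by algebra
  then have G2: "(1 - of_real g * z2\<^sup>2) * (z3 + z1) + 2 * of_real K * z2 = 0"
    using \<open>z3 \<noteq> z1\<close> by simp
  have "(z1 - z2) * (2 * of_real K - 1 - of_real g * (z1 * z2 + z2 * z3 + z3 * z1)) = 0"
    using G1 G2 by algebra
  then have e2: "of_real g * (z1 * z2 + z2 * z3 + z3 * z1) = 2 * of_real K - 1"
    using \<open>z1 \<noteq> z2\<close> by simp
  then show e1: "z1 + z2 + z3 = - of_real g * (z1 * z2 * z3)"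
    using G1 by algebra
  \<comment> \<open>The second symmetric function is real, and conjugation inverts each z_k.\<close>
  have unit: "z1 * cnj z1 = 1" "z2 * cnj z2 = 1" "z3 * cnj z3 = 1"
    using u1 u2 u3 unfolding z1_def z2_def z3_def by (simp_all add: complex_eq_iff power2_eq_square)
  have "z1 * z2 + z2 * z3 + z3 * z1 = complex_of_real ((2 * K - 1) / g)"
    using e2 \<open>g \<noteq> 0\<close> by (simp add: field_simps)
  then have "z1 * z2 + z2 * z3 + z3 * z1 = cnj z1 * cnj z2 + cnj z2 * cnj z3 + cnj z3 * cnj z1"
    by (metis complex_cnj_add complex_cnj_complex_of_real complex_cnj_mult)
  then have "(z1 * z2 + z2 * z3 + z3 * z1 + of_real g) * (z1 * z2 * z3) = 0"
    using unit e1 by algebra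
  moreover have "z1 * z2 * z3 \<noteq> 0"
    using unit by auto
  ultimately show e2': "z1 * z2 + z2 * z3 + z3 * z1 = - of_real g"
    by (simp add: eq_neg_iff_add_eq_0)
  have "complex_of_real (2 * K - 1) = complex_of_real (- g\<^sup>2)"
    using e2 e2' by (simp add: power2_eq_square)
  then show "2 * K - 1 = - g\<^sup>2"
    using of_real_eq_iff by blast
qed

lemma ellipse_caustic_closure:
  fixes a b c s X1 Y1 X2 Y2 X3 Y3 :: real
  assumes u1: "X1\<^sup>2 + Y1\<^sup>2 = 1" and u2: "X2\<^sup>2 + Y2\<^sup>2 = 1" and u3: "X3\<^sup>2 + Y3\<^sup>2 = 1"
    and d12: "(X1, Y1) \<noteq> (X2, Y2)" and d23: "(X2, Y2) \<noteq> (X3, Y3)" and d31: "(X3, Y3) \<noteq> (X1, Y1)"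
    and "s > 0" "c \<noteq> 0" and c: "c\<^sup>2 = a\<^sup>2 - b\<^sup>2"
    and c23: "1 - X2 * X3 - Y2 * Y3 = s * (a\<^sup>2 + b\<^sup>2 - (a\<^sup>2 - b\<^sup>2) * (X2 * X3 - Y2 * Y3))"
    and c31: "1 - X3 * X1 - Y3 * Y1 = s * (a\<^sup>2 + b\<^sup>2 - (a\<^sup>2 - b\<^sup>2) * (X3 * X1 - Y3 * Y1))"
    and c12: "1 - X1 * X2 - Y1 * Y2 = s * (a\<^sup>2 + b\<^sup>2 - (a\<^sup>2 - b\<^sup>2) * (X1 * X2 - Y1 * Y2))"
  defines "g \<equiv> s * c\<^sup>2"
  defines "z1 \<equiv> Complex X1 Y1" and "z2 \<equiv> Complex X2 Y2" and "z3 \<equiv> Complex X3 Y3"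
  shows "z1 + z2 + z3 = - of_real g * (z1 * z2 * z3)" and "z1 * z2 + z2 * z3 + z3 * z1 = - of_real g"
    and "c\<^sup>2 * g\<^sup>2 + 2 * (2 * a\<^sup>2 - c\<^sup>2) * g - 3 * c\<^sup>2 = 0"
proof -
  define K where "K = s * (a\<^sup>2 + b\<^sup>2) - 1"
  have rel: "K + (X * X' + Y * Y') = g * (X * X' - Y * Y')"
    if "1 - X * X' - Y * Y' = s * (a\<^sup>2 + b\<^sup>2 - (a\<^sup>2 - b\<^sup>2) * (X * X' - Y * Y'))" for X Y X' Y'
    using that unfolding K_def g_def c by algebra
  have "g \<noteq> 0"
    using assms(7,8) unfolding g_def by simp
  note closure = unit_circle_triple_relations[OF u1 u2 u3 d12 d23 d31 \<open>g \<noteq> 0\<close>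
      rel[OF c23] rel[OF c31] rel[OF c12], folded z1_def z2_def z3_def]
  show "z1 + z2 + z3 = - of_real g * (z1 * z2 * z3)"
    by (fact closure(1))
  show "z1 * z2 + z2 * z3 + z3 * z1 = - of_real g"
    by (fact closure(2))
  show "c\<^sup>2 * g\<^sup>2 + 2 * (2 * a\<^sup>2 - c\<^sup>2) * g - 3 * c\<^sup>2 = 0"
    using closure(3) unfolding K_def g_def c by algebra
qed

lemma focal_weights_sum:
  fixes z1 z2 z3 a c :: "'a::idom"
  defines "u1 \<equiv> (c * z1\<^sup>2 + 2 * a * z1 + c) * (z2 - z3)\<^sup>2"
    and "u2 \<equiv> (c * z2\<^sup>2 + 2 * a * z2 + c) * (z3 - z1)\<^sup>2"
    and "u3 \<equiv> (c * z3\<^sup>2 + 2 * a * z3 + c) * (z1 - z2)\<^sup>2"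
  defines "e1 \<equiv> z1 + z2 + z3" and "e2 \<equiv> z1 * z2 + z2 * z3 + z3 * z1" and "e3 \<equiv> z1 * z2 * z3"
  shows "u1 + u2 + u3 = 2 * c * e1\<^sup>2 + 2 * a * e1 * e2 - 6 * c * e1 * e3
    + 2 * c * e2\<^sup>2 - 6 * c * e2 - 18 * a * e3"
  unfolding assms by algebra

lemma focal_weights_pair_sum:
  fixes z1 z2 z3 a c :: "'a::idom"
  defines "u1 \<equiv> (c * z1\<^sup>2 + 2 * a * z1 + c) * (z2 - z3)\<^sup>2"
    and "u2 \<equiv> (c * z2\<^sup>2 + 2 * a * z2 + c) * (z3 - z1)\<^sup>2"
    and "u3 \<equiv> (c * z3\<^sup>2 + 2 * a * z3 + c) * (z1 - z2)\<^sup>2"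
  defines "e1 \<equiv> z1 + z2 + z3" and "e2 \<equiv> z1 * z2 + z2 * z3 + z3 * z1" and "e3 \<equiv> z1 * z2 * z3"
  shows "u1 * u2 + u2 * u3 + u3 * u1 = c\<^sup>2 * e1 ^ 4 + 2 * a * c * e1 ^ 3 * e2
    + 4 * a\<^sup>2 * e1 ^ 3 * e3 - 10 * c\<^sup>2 * e1 ^ 3 * e3
    + 3 * c\<^sup>2 * e1\<^sup>2 * e2\<^sup>2 - 6 * a * c * e1\<^sup>2 * e2 * e3
    - 6 * c\<^sup>2 * e1\<^sup>2 * e2 + 9 * c\<^sup>2 * e1\<^sup>2 * e3\<^sup>2
    - 18 * a * c * e1\<^sup>2 * e3 + 2 * a * c * e1 * e2 ^ 3
    - 6 * c\<^sup>2 * e1 * e2\<^sup>2 * e3 - 6 * a * c * e1 * e2\<^sup>2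
    - 36 * a\<^sup>2 * e1 * e2 * e3 + 36 * c\<^sup>2 * e1 * e2 * e3
    + 54 * a * c * e1 * e3\<^sup>2 + c\<^sup>2 * e2 ^ 4 + 4 * a\<^sup>2 * e2 ^ 3
    - 10 * c\<^sup>2 * e2 ^ 3 - 18 * a * c * e2\<^sup>2 * e3 + 9 * c\<^sup>2 * e2\<^sup>2
    + 54 * a * c * e2 * e3 + 108 * a\<^sup>2 * e3\<^sup>2 - 27 * c\<^sup>2 * e3\<^sup>2"
  unfolding assms by algebra

lemma focal_quadratic_prod:
  fixes z1 z2 z3 a c :: "'a::idom"
  defines "e1 \<equiv> z1 + z2 + z3" and "e2 \<equiv> z1 * z2 + z2 * z3 + z3 * z1" and "e3 \<equiv> z1 * z2 * z3"
  shows "(c * z1\<^sup>2 + 2 * a * z1 + c) * (c * z2\<^sup>2 + 2 * a * z2 + c) * (c * z3\<^sup>2 + 2 * a * z3 + c) =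
    c ^ 3 * e1\<^sup>2 + 2 * a * c\<^sup>2 * e1 * e2 + 4 * a\<^sup>2 * c * e1 * e3
    - 2 * c ^ 3 * e1 * e3 + 2 * a * c\<^sup>2 * e1 + c ^ 3 * e2\<^sup>2
    + 2 * a * c\<^sup>2 * e2 * e3 + 4 * a\<^sup>2 * c * e2 - 2 * c ^ 3 * e2
    + c ^ 3 * e3\<^sup>2 + 8 * a ^ 3 * e3 - 6 * a * c\<^sup>2 * e3 + c ^ 3"
  unfolding assms by algebra

lemma cubic_discriminant:
  fixes z1 z2 z3 :: "'a::idom"
  defines "e1 \<equiv> z1 + z2 + z3" and "e2 \<equiv> z1 * z2 + z2 * z3 + z3 * z1" and "e3 \<equiv> z1 * z2 * z3"
  shows "((z2 - z3) * (z3 - z1) * (z1 - z2))\<^sup>2 = e1\<^sup>2 * e2\<^sup>2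
    - 4 * e1 ^ 3 * e3 + 18 * e1 * e2 * e3 - 4 * e2 ^ 3 - 27 * e3\<^sup>2"
  unfolding assms by algebra

lemma focal_weights_relation:
  fixes z1 z2 z3 a c g :: "'a::field_char_0"
  assumes e1: "z1 + z2 + z3 = - g * (z1 * z2 * z3)" and e2: "z1 * z2 + z2 * z3 + z3 * z1 = - g"
    and g: "c\<^sup>2 * g\<^sup>2 + 2 * (2 * a\<^sup>2 - c\<^sup>2) * g - 3 * c\<^sup>2 = 0"
  defines "u1 \<equiv> (c * z1\<^sup>2 + 2 * a * z1 + c) * (z2 - z3)\<^sup>2"
    and "u2 \<equiv> (c * z2\<^sup>2 + 2 * a * z2 + c) * (z3 - z1)\<^sup>2"
    and "u3 \<equiv> (c * z3\<^sup>2 + 2 * a * z3 + c) * (z1 - z2)\<^sup>2"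
    and "d \<equiv> (g * c\<^sup>2 + 2 * a\<^sup>2 - c\<^sup>2) / 2"
  shows "a\<^sup>2 * c\<^sup>2 * ((u2 + u3 - u1) * (u3 + u1 - u2) * (u1 + u2 - u3))
    + 2 * (d - a\<^sup>2) * (d - c\<^sup>2) * (u1 * u2 * u3) = 0"
proof -
  define e3 where "e3 = z1 * z2 * z3"
  have "(u2 + u3 - u1) * (u3 + u1 - u2) * (u1 + u2 - u3)
      = 4 * (u1 + u2 + u3) * (u1 * u2 + u2 * u3 + u3 * u1) - (u1 + u2 + u3) ^ 3 - 8 * (u1 * u2 * u3)"
    by algebra
  moreover have "u1 * u2 * u3 = (c * z1\<^sup>2 + 2 * a * z1 + c) * (c * z2\<^sup>2 + 2 * a * z2 + c)
      * (c * z3\<^sup>2 + 2 * a * z3 + c) * ((z2 - z3) * (z3 - z1) * (z1 - z2))\<^sup>2"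
    unfolding u1_def u2_def u3_def by algebra
  ultimately show ?thesis
    unfolding focal_weights_sum[of c z1 a z2 z3, folded u1_def u2_def u3_def]
      focal_weights_pair_sum[of c z1 a z2 z3, folded u1_def u2_def u3_def]
      focal_quadratic_prod cubic_discriminant e1 e2 e3_def[symmetric] d_def
    using g by algebra
qed

(* On the unit circle 1 - X X' - Y Y' = - (z - z')^2 / (2 z z') and a + c X = (c z^2 + 2 a z + c) / (2 z). *)
lemma focal_weight_complex:
  fixes X1 Y1 X2 Y2 X3 Y3 a c :: real
  assumes "X1\<^sup>2 + Y1\<^sup>2 = 1" "X2\<^sup>2 + Y2\<^sup>2 = 1" "X3\<^sup>2 + Y3\<^sup>2 = 1"
  defines "z1 \<equiv> Complex X1 Y1" and "z2 \<equiv> Complex X2 Y2" and "z3 \<equiv> Complex X3 Y3"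
  shows "4 * (z1 * z2 * z3) * of_real ((1 - X2 * X3 - Y2 * Y3) * (a + c * X1))
    = - ((of_real c * z1\<^sup>2 + 2 * of_real a * z1 + of_real c) * (z2 - z3)\<^sup>2)"
proof -
  have unit: "(of_real X)\<^sup>2 + (of_real Y)\<^sup>2 = (1 :: complex)" if "X\<^sup>2 + Y\<^sup>2 = 1" for X Y :: real
    using arg_cong[OF that, of complex_of_real] by simp
  have "\<i> * \<i> = (- 1 :: complex)"
    by simp
  then show ?thesis
    unfolding z1_def z2_def z3_def Complex_eq using unit[OF assms(1)] unit[OF assms(2)] unit[OF assms(3)]
    by (simp only: of_real_mult of_real_diff of_real_add of_real_1) algebra
qed

lemma focal_weights_cos_sum:
  fixes X1 Y1 X2 Y2 X3 Y3 a c g :: real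
  defines "z1 \<equiv> Complex X1 Y1" and "z2 \<equiv> Complex X2 Y2" and "z3 \<equiv> Complex X3 Y3"
  defines "W1 \<equiv> (1 - X2 * X3 - Y2 * Y3) * (a + c * X1)"
    and "W2 \<equiv> (1 - X3 * X1 - Y3 * Y1) * (a + c * X2)"
    and "W3 \<equiv> (1 - X1 * X2 - Y1 * Y2) * (a + c * X3)"
    and "d \<equiv> (g * c\<^sup>2 + 2 * a\<^sup>2 - c\<^sup>2) / 2"
  assumes u1: "X1\<^sup>2 + Y1\<^sup>2 = 1" and u2: "X2\<^sup>2 + Y2\<^sup>2 = 1" and u3: "X3\<^sup>2 + Y3\<^sup>2 = 1"
    and ac: "a \<noteq> 0" "c \<noteq> 0" and W: "W1 \<noteq> 0" "W2 \<noteq> 0" "W3 \<noteq> 0"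
    and e1: "z1 + z2 + z3 = - of_real g * (z1 * z2 * z3)" and e2: "z1 * z2 + z2 * z3 + z3 * z1 = - of_real g"
    and g: "c\<^sup>2 * g\<^sup>2 + 2 * (2 * a\<^sup>2 - c\<^sup>2) * g - 3 * c\<^sup>2 = 0"
  shows "cos_sum_sides W1 W2 W3 = d * (a\<^sup>2 + c\<^sup>2 - d) / (a\<^sup>2 * c\<^sup>2)"
proof -
  let ?c = complex_of_real
  define k where "k = 4 * (z1 * z2 * z3)"
  have "k \<noteq> 0"
  proof -
    have "Complex X Y \<noteq> 0" if "X\<^sup>2 + Y\<^sup>2 = 1" for X Y
      using that by (auto simp: complex_eq_iff)
    then show ?thesis
      using u1 u2 u3 unfolding k_def z1_def z2_def z3_def by simp
  qed
  have w1: "(?c c * z1\<^sup>2 + 2 * ?c a * z1 + ?c c) * (z2 - z3)\<^sup>2 = - (k * ?c W1)"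
    unfolding k_def W1_def z1_def z2_def z3_def focal_weight_complex[OF u1 u2 u3] by simp
  have w2: "(?c c * z2\<^sup>2 + 2 * ?c a * z2 + ?c c) * (z3 - z1)\<^sup>2 = - (k * ?c W2)"
    using focal_weight_complex[OF u2 u3 u1, of a c]
    unfolding k_def W2_def z1_def z2_def z3_def by (simp add: ac_simps)
  have w3: "(?c c * z3\<^sup>2 + 2 * ?c a * z3 + ?c c) * (z1 - z2)\<^sup>2 = - (k * ?c W3)"
    using focal_weight_complex[OF u3 u1 u2, of a c]
    unfolding k_def W3_def z1_def z2_def z3_def by (simp add: ac_simps)
  have "(?c c)\<^sup>2 * (?c g)\<^sup>2 + 2 * (2 * (?c a)\<^sup>2 - (?c c)\<^sup>2) * ?c g - 3 * (?c c)\<^sup>2 = 0"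
    using arg_cong[OF g, of ?c] by simp
  note rel_u = focal_weights_relation[OF e1 e2 this, unfolded w1 w2 w3]
  have scale: "A * ((- (k * x2) + - (k * x3) - - (k * x1)) * (- (k * x3) + - (k * x1) - - (k * x2))
        * (- (k * x1) + - (k * x2) - - (k * x3))) + B * (- (k * x1) * - (k * x2) * - (k * x3))
      = - (k ^ 3 * (A * ((x2 + x3 - x1) * (x3 + x1 - x2) * (x1 + x2 - x3)) + B * (x1 * x2 * x3)))"
    for A B x1 x2 x3 :: complex
    by algebra
  have "?c (a\<^sup>2 * c\<^sup>2 * ((W2 + W3 - W1) * (W3 + W1 - W2) * (W1 + W2 - W3))
      + 2 * (d - a\<^sup>2) * (d - c\<^sup>2) * (W1 * W2 * W3)) = 0"
    using rel_u \<open>k \<noteq> 0\<close> unfolding scale d_def by simp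
  then have rel: "a\<^sup>2 * c\<^sup>2 * ((W2 + W3 - W1) * (W3 + W1 - W2) * (W1 + W2 - W3))
      = - 2 * (d - a\<^sup>2) * (d - c\<^sup>2) * (W1 * W2 * W3)"
    by (simp only: of_real_eq_0_iff)
  have "cos_sum_sides W1 W2 W3 = 1 + (W2 + W3 - W1) * (W3 + W1 - W2) * (W1 + W2 - W3) / (2 * W1 * W2 * W3)"
    using W by (rule cos_sum_sides_eq)
  also have "\<dots> = 1 - (d - a\<^sup>2) * (d - c\<^sup>2) / (a\<^sup>2 * c\<^sup>2)"
    using rel ac W by (simp add: field_simps)
  also have "\<dots> = d * (a\<^sup>2 + c\<^sup>2 - d) / (a\<^sup>2 * c\<^sup>2)"
    using ac by (simp add: field_simps)
  finally show ?thesis .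
qed

lemma sqrt_quartic_eq_caustic:
  fixes a b c g :: real
  assumes "c\<^sup>2 = a\<^sup>2 - b\<^sup>2" "b \<noteq> 0" "g > 0"
    and "c\<^sup>2 * g\<^sup>2 + 2 * (2 * a\<^sup>2 - c\<^sup>2) * g - 3 * c\<^sup>2 = 0"
  shows "sqrt (a ^ 4 - a\<^sup>2 * b\<^sup>2 + b ^ 4) = (g * c\<^sup>2 + 2 * a\<^sup>2 - c\<^sup>2) / 2"
proof -
  have "c\<^sup>2 < a\<^sup>2"
    using assms(1,2) by simp
  moreover have "g * c\<^sup>2 \<ge> 0"
    using assms(3) by simp
  ultimately have "g * c\<^sup>2 + 2 * a\<^sup>2 - c\<^sup>2 > 0"
    using zero_le_power2[of c] by linarith
  then have "(g * c\<^sup>2 + 2 * a\<^sup>2 - c\<^sup>2) / 2 > 0"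
    by simp
  moreover have "4 * (a ^ 4 - a\<^sup>2 * b\<^sup>2 + b ^ 4) = (g * c\<^sup>2 + 2 * a\<^sup>2 - c\<^sup>2)\<^sup>2"
    using assms(1,4) by algebra
  then have "a ^ 4 - a\<^sup>2 * b\<^sup>2 + b ^ 4 = ((g * c\<^sup>2 + 2 * a\<^sup>2 - c\<^sup>2) / 2)\<^sup>2"
    by (simp add: power_divide)
  ultimately show ?thesis
    by simp
qed

theorem mainTheorem12:
  fixes a b rho :: real and P1 P2 P3 :: pt
  assumes "a > b" "b > 0" "rho > 0"
    and "three_periodic a b P1 P2 P3"
  defines "c \<equiv> sqrt (a\<^sup>2 - b\<^sup>2)"
    and "\<delta> \<equiv> sqrt (a ^ 4 - a\<^sup>2 * b\<^sup>2 + b ^ 4)"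
  defines "f1 \<equiv> (- c, 0)"
  defines "Q1 \<equiv> invert f1 rho P1" and "Q2 \<equiv> invert f1 rho P2" and "Q3 \<equiv> invert f1 rho P3"
  shows "cos (tri_angle Q1 Q2 Q3) + cos (tri_angle Q2 Q3 Q1) + cos (tri_angle Q3 Q1 Q2)
         = \<delta> * (a\<^sup>2 + c\<^sup>2 - \<delta>) / (a\<^sup>2 * c\<^sup>2)"
proof -
  have "a > 0" and c: "c\<^sup>2 = a\<^sup>2 - b\<^sup>2" "c > 0" "c < a"
    using assms(1,2) power_strict_mono[of b a 2] unfolding c_def by (auto intro: real_less_lsqrt)
  obtain X1 Y1 X2 Y2 X3 Y3 s where P: "P1 = (a * X1, b * Y1)" "P2 = (a * X2, b * Y2)" "P3 = (a * X3, b * Y3)"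
    and u: "X1\<^sup>2 + Y1\<^sup>2 = 1" "X2\<^sup>2 + Y2\<^sup>2 = 1" "X3\<^sup>2 + Y3\<^sup>2 = 1"
    and d: "(X1, Y1) \<noteq> (X2, Y2)" "(X2, Y2) \<noteq> (X3, Y3)" "(X3, Y3) \<noteq> (X1, Y1)"
    and "s > 0" and caustic: "1 - X2 * X3 - Y2 * Y3 = s * (a\<^sup>2 + b\<^sup>2 - (a\<^sup>2 - b\<^sup>2) * (X2 * X3 - Y2 * Y3))"
      "1 - X3 * X1 - Y3 * Y1 = s * (a\<^sup>2 + b\<^sup>2 - (a\<^sup>2 - b\<^sup>2) * (X3 * X1 - Y3 * Y1))"
      "1 - X1 * X2 - Y1 * Y2 = s * (a\<^sup>2 + b\<^sup>2 - (a\<^sup>2 - b\<^sup>2) * (X1 * X2 - Y1 * Y2))"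
    using three_periodic_caustic[OF \<open>a > 0\<close> assms(2,4)] by blast
  define g where "g = s * c\<^sup>2"
  note closure = ellipse_caustic_closure[OF u d \<open>s > 0\<close> _ c(1) caustic, folded g_def]
  have \<delta>_eq: "\<delta> = (g * c\<^sup>2 + 2 * a\<^sup>2 - c\<^sup>2) / 2"
    unfolding \<delta>_def using assms(2) c(2) \<open>s > 0\<close> closure(3)
    by (intro sqrt_quartic_eq_caustic[OF c(1)]) (auto simp: g_def)
  have R_pos: "a + c * X1 > 0" "a + c * X2 > 0" "a + c * X3 > 0"
    using ellipse_focal_distance(2)[OF _ c(1) _ c(3)] u c(2) by auto
  have R: "norm (P1 - f1) = a + c * X1" "norm (P2 - f1) = a + c * X2" "norm (P3 - f1) = a + c * X3"
    unfolding P f1_def using ellipse_focal_distance(1)[OF _ c(1) _ c(3)] u c(2) by auto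
  note chord_pos = unit_circle_chord_pos[OF u(2,3) d(2)] unit_circle_chord_pos[OF u(3,1) d(3)]
    unit_circle_chord_pos[OF u(1,2) d(1)]
  have L: "norm (P2 - P3) = (1 - X2 * X3 - Y2 * Y3) / sqrt s"
    "norm (P3 - P1) = (1 - X3 * X1 - Y3 * Y1) / sqrt s"
    "norm (P1 - P2) = (1 - X1 * X2 - Y1 * Y2) / sqrt s"
    unfolding P using \<open>s > 0\<close>
      ellipse_chord_norm_caustic[OF u(2,3) less_imp_le[OF chord_pos(1)] _ caustic(1)]
      ellipse_chord_norm_caustic[OF u(3,1) less_imp_le[OF chord_pos(2)] _ caustic(2)]
      ellipse_chord_norm_caustic[OF u(1,2) less_imp_le[OF chord_pos(3)] _ caustic(3)]
    by simp_all
  have "cos (tri_angle Q1 Q2 Q3) + cos (tri_angle Q2 Q3 Q1) + cos (tri_angle Q3 Q1 Q2)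
      = cos_sum_sides (norm (P2 - P3) * norm (P1 - f1)) (norm (P3 - P1) * norm (P2 - f1))
          (norm (P1 - P2) * norm (P3 - f1))"
    unfolding Q1_def Q2_def Q3_def using assms(3) R R_pos by (intro cos_sum_invert) auto
  also have "\<dots> = cos_sum_sides (1 / sqrt s * ((1 - X2 * X3 - Y2 * Y3) * (a + c * X1)))
      (1 / sqrt s * ((1 - X3 * X1 - Y3 * Y1) * (a + c * X2)))
      (1 / sqrt s * ((1 - X1 * X2 - Y1 * Y2) * (a + c * X3)))"
    unfolding L R by simp
  also have "\<dots> = cos_sum_sides ((1 - X2 * X3 - Y2 * Y3) * (a + c * X1))
      ((1 - X3 * X1 - Y3 * Y1) * (a + c * X2)) ((1 - X1 * X2 - Y1 * Y2) * (a + c * X3))"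
    using \<open>s > 0\<close> by (intro cos_sum_sides_scale) simp
  also have "\<dots> = \<delta> * (a\<^sup>2 + c\<^sup>2 - \<delta>) / (a\<^sup>2 * c\<^sup>2)"
    unfolding \<delta>_eq using \<open>a > 0\<close> c(2) chord_pos R_pos
    by (intro focal_weights_cos_sum[OF u _ _ _ _ _ closure]) auto
  finally show ?thesis .
qed

end
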